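(* For every positive integer $n$, the domination polynomial of the book graph $B_n$ is $$D(B_n,x)=(x^2+2x)^n(2x+1)+x^2(x+1)^{2n}-2x^n.$$ *)

theory Defs
  imports "HOL-Computational_Algebra.Polynomial"
begin

type_synonym 'a graph = "'a set \<times> ('a \<Rightarrow> 'a \<Rightarrow> bool)"

definition verts :: "'a graph \<Rightarrow> 'a set" where "verts G = fst G"
definition adj :: "'a graph \<Rightarrow> 'a \<Rightarrow> 'a \<Rightarrow> bool" where "adj G = snd G"

definition dominating_set :: "'a graph \<Rightarrow> 'a set \<Rightarrow> bool" where
  "dominating_set G S \<longleftrightarrow> S \<subseteq> verts G \<and>
     (\<forall>v\<in>verts G. v \<in> S \<or> (\<exists>u\<in>S. adj G u v))"

definition domination_poly :: "'a graph \<Rightarrow> int poly" where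
  "domination_poly G = (\<Sum>S\<in>{S. dominating_set G S}. monom 1 (card S))"

definition star_graph :: "nat \<Rightarrow> nat graph" where
  "star_graph n = ({0..n}, \<lambda>i j. (i = 0 \<and> 1 \<le> j \<and> j \<le> n) \<or> (j = 0 \<and> 1 \<le> i \<and> i \<le> n))"

definition K2 :: "nat graph" where
  "K2 = ({0,1}, \<lambda>i j. i \<noteq> j \<and> i \<in> {0,1} \<and> j \<in> {0,1})"

definition cart_prod :: "'a graph \<Rightarrow> 'b graph \<Rightarrow> ('a \<times> 'b) graph" where
  "cart_prod G H = (verts G \<times> verts H,
     \<lambda>(a,b) (c,d). (a = c \<and> a \<in> verts G \<and> adj H b d) \<or> (b = d \<and> b \<in> verts H \<and> adj G a c))"

definition book_graph :: "nat \<Rightarrow> (nat \<times> nat) graph" where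
  "book_graph n = cart_prod (star_graph n) K2"

end

theory Submission
  imports Defs "HOL-Library.FuncSet"
begin

text \<open>A vertex set of the book graph is determined by its trace C on the spine
{0} \<times> {0,1} and its traces f i \<subseteq> {0,1} on the pages i = 1..n, and whether it dominates
depends on C as follows. If C is the whole spine, every choice of pages works, contributing
x^2 (1+x)^(2n). If C is a single spine vertex, exactly the choices with all pages nonempty
work, contributing x (x^2+2x)^n twice. If C is empty, the pages must moreover meet both
rows, which excludes exactly the two choices where every page is the same singleton,
contributing (x^2+2x)^n - 2x^n.\<close>

lemma ball_atLeast0AtMost_split:
  "(\<forall>a\<in>{0..n::nat}. P a) \<longleftrightarrow> P 0 \<and> (\<forall>i\<in>{1..n}. P i)"
  by (simp flip: atLeastAtMost_insertL)

lemma PiE_Diff_singleton: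
  "(\<Pi>\<^sub>E i\<in>I. A - {a}) = {f \<in> (\<Pi>\<^sub>E i\<in>I. A). \<forall>i\<in>I. f i \<noteq> a}"
  by (auto simp: PiE_iff extensional_def)

lemma eq_restrict_iff: "f \<in> extensional I \<Longrightarrow> f = restrict g I \<longleftrightarrow> (\<forall>i\<in>I. f i = g i)"
  by (metis extensional_restrict restrict_apply' restrict_ext)

lemma sum_PiE_prod_const:
  fixes g :: "'b \<Rightarrow> 'c::comm_semiring_1"
  assumes "finite I" and "finite A"
  shows "(\<Sum>f\<in>(\<Pi>\<^sub>E i\<in>I. A). \<Prod>i\<in>I. g (f i)) = (\<Sum>a\<in>A. g a) ^ card I"
  using prod_sum_PiE[of I "\<lambda>_. A" "\<lambda>_. g"] assms by simp

lemma domination_poly_eq_sum_Pow: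
  assumes "finite (verts G)"
  shows "domination_poly G =
    (\<Sum>S\<in>Pow (verts G). if dominating_set G S then monom 1 (card S) else 0)"
proof -
  have "{S. dominating_set G S} = {S \<in> Pow (verts G). dominating_set G S}"
    by (auto simp: dominating_set_def)
  then show ?thesis
    unfolding domination_poly_def using assms by (simp only: sum.inter_filter finite_Pow_iff)
qed

lemma verts_book_graph: "verts (book_graph n) = {0..n} \<times> {0,1}"
  by (simp add: book_graph_def cart_prod_def verts_def star_graph_def K2_def)

lemma adj_book_graph:
  "adj (book_graph n) (a, b) (c, d) \<longleftrightarrow>
     b \<in> {0,1} \<and> d \<in> {0,1} \<and>
     (a = c \<and> a \<le> n \<and> b \<noteq> d \<or> b = d \<and> (a = 0 \<and> c \<in> {1..n} \<or> c = 0 \<and> a \<in> {1..n}))"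
  by (auto simp: book_graph_def cart_prod_def verts_def adj_def star_graph_def K2_def)

lemma book_graph_dominates_spine_iff:
  "(\<exists>u\<in>S. adj (book_graph n) u (0, b)) \<longleftrightarrow>
     b \<in> {0,1} \<and> ((0, 1 - b) \<in> S \<or> (\<exists>i\<in>{1..n}. (i, b) \<in> S))"
  by (cases "b = 0") (auto simp: adj_book_graph Bex_def)

lemma book_graph_dominates_page_iff:
  assumes "a \<in> {1..n}"
  shows "(\<exists>u\<in>S. adj (book_graph n) u (a, b)) \<longleftrightarrow>
     b \<in> {0,1} \<and> ((a, 1 - b) \<in> S \<or> (0, b) \<in> S)"
  using assms by (cases "b = 0") (auto simp: adj_book_graph Bex_def)

lemma dominating_set_book_graph_iff:
  "dominating_set (book_graph n) S \<longleftrightarrow> S \<subseteq> {0..n} \<times> {0,1} \<and>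
    (\<forall>b\<in>{0,1}. ((0, b) \<in> S \<or> (0, 1 - b) \<in> S \<or> (\<exists>i\<in>{1..n}. (i, b) \<in> S)) \<and>
      (\<forall>i\<in>{1..n}. (i, b) \<in> S \<or> (i, 1 - b) \<in> S \<or> (0, b) \<in> S))"
  unfolding dominating_set_def verts_book_graph split_paired_Ball_Sigma ball_atLeast0AtMost_split
  by (auto simp: book_graph_dominates_spine_iff book_graph_dominates_page_iff)

definition book_set :: "nat \<Rightarrow> nat set \<Rightarrow> (nat \<Rightarrow> nat set) \<Rightarrow> (nat \<times> nat) set" where
  "book_set n C f = Pair 0 ` C \<union> (SIGMA i:{1..n}. f i)"

lemma mem_book_set_iff:
  "(a, b) \<in> book_set n C f \<longleftrightarrow> a = 0 \<and> b \<in> C \<or> a \<in> {1..n} \<and> b \<in> f a"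
  by (auto simp: book_set_def)

lemma dominating_book_set_iff:
  assumes "C \<subseteq> {0,1}" and "f \<in> (\<Pi>\<^sub>E i\<in>{1..n}. Pow {0,1})"
  shows "dominating_set (book_graph n) (book_set n C f) \<longleftrightarrow>
    (\<forall>i\<in>{1..n}. f i \<noteq> {} \<or> C = {0,1}) \<and>
    (C \<noteq> {} \<or> (\<exists>i\<in>{1..n}. 0 \<in> f i) \<and> (\<exists>i\<in>{1..n}. 1 \<in> f i))"
proof -
  have "book_set n C f \<subseteq> {0..n} \<times> {0,1}"
    using assms by (auto simp: book_set_def)
  moreover have "f i \<noteq> {} \<longleftrightarrow> 0 \<in> f i \<or> 1 \<in> f i" if "i \<in> {1..n}" for i
    using assms(2) that by auto
  moreover have "C = {0,1} \<longleftrightarrow> 0 \<in> C \<and> 1 \<in> C" and "C = {} \<longleftrightarrow> 0 \<notin> C \<and> 1 \<notin> C"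
    using assms(1) by auto
  ultimately show ?thesis
    unfolding dominating_set_book_graph_iff by (auto simp: mem_book_set_iff)
qed

lemma book_set_fibres:
  assumes "S \<subseteq> {0..n} \<times> B"
  shows "book_set n {b. (0, b) \<in> S} (\<lambda>i. {b. (i, b) \<in> S}) = S"
proof (rule set_eqI)
  fix v :: "nat \<times> nat"
  show "v \<in> book_set n {b. (0, b) \<in> S} (\<lambda>i. {b. (i, b) \<in> S}) \<longleftrightarrow> v \<in> S"
    using assms by (cases v; cases "fst v = 0") (auto simp: mem_book_set_iff)
qed

lemma bij_betw_book_set:
  "bij_betw (\<lambda>(C, f). book_set n C f) (Pow {0,1} \<times> (\<Pi>\<^sub>E i\<in>{1..n}. Pow {0,1}))
     (Pow ({0..n} \<times> {0,1}))"
proof (rule bij_betw_byWitness[where f' = "\<lambda>S. ({b. (0, b) \<in> S}, \<lambda>i\<in>{1..n}. {b. (i, b) \<in> S})"])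
  have "book_set n C (restrict f {1..n}) = book_set n C f" for C f
    by (auto simp: book_set_def)
  then show "\<forall>S\<in>Pow ({0..n} \<times> {0,1}). (\<lambda>(C, f). book_set n C f)
      ({b. (0, b) \<in> S}, \<lambda>i\<in>{1..n}. {b. (i, b) \<in> S}) = S"
    using book_set_fibres by auto
qed (auto simp: book_set_def PiE_iff fun_eq_iff)

lemma card_book_set:
  assumes "finite C" and "\<And>i. i \<in> {1..n} \<Longrightarrow> finite (f i)"
  shows "card (book_set n C f) = card C + (\<Sum>i\<in>{1..n}. card (f i))"
proof -
  have "card (book_set n C f) = card (Pair (0::nat) ` C) + card (SIGMA i:{1..n}. f i)"
    unfolding book_set_def using assms by (intro card_Un_disjoint) auto
  also have "card (Pair (0::nat) ` C) = card C"
    by (simp add: card_image inj_on_def)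
  finally show ?thesis
    using assms by (simp add: card_SigmaI)
qed

lemma sum_Pow_book_verts_eq:
  "(\<Sum>S\<in>Pow ({0..n} \<times> {0,1}). g S) =
     (\<Sum>(C, f)\<in>Pow {0,1} \<times> (\<Pi>\<^sub>E i\<in>{1..n}. Pow {0,1}). g (book_set n C f))"
  using sum.reindex_bij_betw[OF bij_betw_book_set, of g n] by (simp add: prod.case_distrib)

definition dominating_pages :: "nat \<Rightarrow> nat set \<Rightarrow> (nat \<Rightarrow> nat set) set" where
  "dominating_pages n C =
     {f \<in> (\<Pi>\<^sub>E i\<in>{1..n}. Pow {0,1}). dominating_set (book_graph n) (book_set n C f)}"

definition dominating_pages_poly :: "nat \<Rightarrow> nat set \<Rightarrow> int poly" where
  "dominating_pages_poly n C = (\<Sum>f\<in>dominating_pages n C. \<Prod>i\<in>{1..n}. [:0,1:] ^ card (f i))"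

lemma domination_poly_book_graph_eq:
  "domination_poly (book_graph n) =
    (\<Sum>C\<in>Pow {0,1}. [:0,1:] ^ card C * dominating_pages_poly n C)"
proof -
  let ?P = "\<Pi>\<^sub>E i\<in>{1..n}. Pow {0::nat,1}"
  let ?w = "\<lambda>f. \<Prod>i\<in>{1..n}. [:0,1:] ^ card (f i) :: int poly"
  have fin_P: "finite ?P"
    by (simp add: finite_PiE)
  have weight: "monom 1 (card (book_set n C f)) = [:0,1:] ^ card C * ?w f"
    if "(C, f) \<in> Pow {0,1} \<times> ?P" for C f
  proof -
    have "C \<subseteq> {0,1}" and "\<And>i. i \<in> {1..n} \<Longrightarrow> f i \<subseteq> {0,1}"
      using that by auto
    then have "finite C" and "\<And>i. i \<in> {1..n} \<Longrightarrow> finite (f i)"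
      by (meson finite.emptyI finite_insert finite_subset)+
    then have "card (book_set n C f) = card C + (\<Sum>i\<in>{1..n}. card (f i))"
      by (rule card_book_set)
    then show ?thesis
      by (simp add: monom_altdef power_add power_sum)
  qed
  have "domination_poly (book_graph n) =
      (\<Sum>S\<in>Pow ({0..n} \<times> {0,1}). if dominating_set (book_graph n) S then monom 1 (card S) else 0)"
    by (simp add: domination_poly_eq_sum_Pow verts_book_graph)
  also have "\<dots> = (\<Sum>(C, f)\<in>Pow {0,1} \<times> ?P.
      if dominating_set (book_graph n) (book_set n C f) then monom 1 (card (book_set n C f)) else 0)"
    by (rule sum_Pow_book_verts_eq)
  also have "\<dots> = (\<Sum>(C, f)\<in>Pow {0,1} \<times> ?P. [:0,1:] ^ card C *
      (if dominating_set (book_graph n) (book_set n C f) then ?w f else 0))"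
    by (rule sum.cong) (auto simp: weight)
  also have "\<dots> = (\<Sum>C\<in>Pow {0,1}. [:0,1:] ^ card C * (\<Sum>f\<in>?P.
      if dominating_set (book_graph n) (book_set n C f) then ?w f else 0))"
    by (simp add: sum.cartesian_product sum_distrib_left)
  also have "\<dots> = (\<Sum>C\<in>Pow {0,1}. [:0,1:] ^ card C * dominating_pages_poly n C)"
    unfolding dominating_pages_poly_def dominating_pages_def sum.inter_filter[OF fin_P] ..
  finally show ?thesis .
qed

lemma dominating_pages_full:
  "dominating_pages n {0,1} = (\<Pi>\<^sub>E i\<in>{1..n}. Pow {0,1})"
  by (auto simp: dominating_pages_def dominating_book_set_iff)

lemma dominating_pages_singleton:
  assumes "b \<in> {0,1}"
  shows "dominating_pages n {b} = (\<Pi>\<^sub>E i\<in>{1..n}. Pow {0,1} - {{}})"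
  using assms by (auto simp: PiE_Diff_singleton dominating_pages_def dominating_book_set_iff)

lemma dominating_pages_empty:
  assumes "n \<ge> 1"
  shows "dominating_pages n {} =
    (\<Pi>\<^sub>E i\<in>{1..n}. Pow {0,1} - {{}}) - {\<lambda>i\<in>{1..n}. {0}, \<lambda>i\<in>{1..n}. {1}}"
proof -
  have "(\<exists>i\<in>{1..n}. 0 \<in> f i) \<and> (\<exists>i\<in>{1..n}. 1 \<in> f i) \<longleftrightarrow>
      f \<noteq> (\<lambda>i\<in>{1..n}. {0}) \<and> f \<noteq> (\<lambda>i\<in>{1..n}. {1})"
    if "f \<in> (\<Pi>\<^sub>E i\<in>{1..n}. Pow {0,1})" and "\<forall>i\<in>{1..n}. f i \<noteq> {}"
    for f :: "nat \<Rightarrow> nat set"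
  proof -
    have "f i = {0} \<longleftrightarrow> 1 \<notin> f i" and "f i = {1} \<longleftrightarrow> 0 \<notin> f i" if "i \<in> {1..n}" for i
    proof -
      have "f i \<subseteq> {0,1}" and "f i \<noteq> {}"
        using \<open>f \<in> _\<close> \<open>\<forall>i\<in>{1..n}. f i \<noteq> {}\<close> that by auto
      then show "f i = {0} \<longleftrightarrow> 1 \<notin> f i" and "f i = {1} \<longleftrightarrow> 0 \<notin> f i"
        by auto
    qed
    moreover have "f \<in> extensional {1..n}"
      using that(1) by (simp add: PiE_iff)
    ultimately show ?thesis
      by (auto simp: eq_restrict_iff)
  qed
  then show ?thesis
    by (auto simp: PiE_Diff_singleton dominating_pages_def dominating_book_set_iff)
qed

lemma Pow_01: "Pow {0::nat,1} = {{}, {0}, {1}, {0,1}}"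
  by blast

lemma sum_card_Pow_01:
  "(\<Sum>a\<in>Pow {0::nat,1}. [:0,1:] ^ card a) = ([:1,1:] ^ 2 :: int poly)"
  unfolding Pow_01 by (simp add: power2_eq_square one_pCons)

lemma sum_card_nonempty_Pow_01:
  "(\<Sum>a\<in>Pow {0::nat,1} - {{}}. [:0,1:] ^ card a) = ([:0,2,1:] :: int poly)"
  unfolding Pow_01 by (simp add: power2_eq_square one_pCons)

lemma dominating_pages_poly_full: "dominating_pages_poly n {0,1} = [:1,1:] ^ (2 * n)"
proof -
  have "(\<Sum>f\<in>(\<Pi>\<^sub>E i\<in>{1..n}. Pow {0::nat,1}). \<Prod>i\<in>{1..n}. [:0,1:] ^ card (f i)) =
      (\<Sum>a\<in>Pow {0::nat,1}. [:0,1:] ^ card a :: int poly) ^ card {1..n}"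
    by (rule sum_PiE_prod_const) simp_all
  then show ?thesis
    unfolding dominating_pages_poly_def dominating_pages_full sum_card_Pow_01
    by (simp add: power_mult)
qed

lemma sum_pages_nonempty:
  "(\<Sum>f\<in>(\<Pi>\<^sub>E i\<in>{1..n}. Pow {0::nat,1} - {{}}). \<Prod>i\<in>{1..n}. [:0,1:] ^ card (f i)) =
     ([:0,2,1:] ^ n :: int poly)"
proof -
  have "(\<Sum>f\<in>(\<Pi>\<^sub>E i\<in>{1..n}. Pow {0::nat,1} - {{}}). \<Prod>i\<in>{1..n}. [:0,1:] ^ card (f i)) =
      (\<Sum>a\<in>Pow {0::nat,1} - {{}}. [:0,1:] ^ card a :: int poly) ^ card {1..n}"
    by (rule sum_PiE_prod_const) simp_all
  then show ?thesis
    unfolding sum_card_nonempty_Pow_01 by simp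
qed

lemma dominating_pages_poly_singleton:
  "b \<in> {0,1} \<Longrightarrow> dominating_pages_poly n {b} = [:0,2,1:] ^ n"
  unfolding dominating_pages_poly_def dominating_pages_singleton sum_pages_nonempty ..

lemma dominating_pages_poly_empty:
  assumes "n \<ge> 1"
  shows "dominating_pages_poly n {} = [:0,2,1:] ^ n - smult 2 (monom 1 n)"
proof -
  let ?P = "\<Pi>\<^sub>E i\<in>{1..n}. Pow {0::nat,1} - {{}}"
  let ?w = "\<lambda>f. \<Prod>i\<in>{1..n}. [:0,1:] ^ card (f i) :: int poly"
  let ?c = "\<lambda>b. \<lambda>i\<in>{1..n}. {b::nat}"
  have "dominating_pages_poly n {} = sum ?w ?P - sum ?w {?c 0, ?c 1}"
    unfolding dominating_pages_poly_def dominating_pages_empty[OF assms]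
    by (rule sum_diff) (auto simp: finite_PiE)
  also have "sum ?w ?P = [:0,2,1:] ^ n"
    by (rule sum_pages_nonempty)
  also have "sum ?w {?c 0, ?c 1} = smult 2 (monom 1 n)"
  proof -
    have "?c 0 \<noteq> ?c 1"
      using assms by (metis atLeastAtMost_iff order_refl restrict_apply' singleton_inject zero_neq_one)
    then show ?thesis
      by (simp add: monom_altdef flip: numeral_mult_conv_smult)
  qed
  finally show ?thesis .
qed

lemma domination_poly_book_graph_expand:
  "domination_poly (book_graph n) = dominating_pages_poly n {} +
     [:0,1:] * (dominating_pages_poly n {0} + dominating_pages_poly n {1}) +
     [:0,1:] ^ 2 * dominating_pages_poly n {0,1}"
proof -
  have "(\<Sum>C\<in>Pow {0::nat,1}. X ^ card C * g C) = g {} + X * (g {0} + g {1}) + X ^ 2 * g {0,1}"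
    for X :: "int poly" and g
    unfolding Pow_01 by (simp add: algebra_simps power2_eq_square)
  then show ?thesis
    by (simp only: domination_poly_book_graph_eq)
qed

theorem mainTheorem5:
  fixes n :: nat
  assumes "n \<ge> 1"
  shows "domination_poly (book_graph n) =
    [:0, 2, 1:] ^ n * [:1, 2:] + [:0, 0, 1:] * [:1, 1:] ^ (2 * n) - smult 2 (monom 1 n)"
proof -
  let ?X = "[:0,1:] :: int poly"
  have "[:1, 2:] = 1 + ?X + ?X" and "[:0, 0, 1:] = ?X ^ 2"
    by (simp_all add: one_pCons power2_eq_square)
  moreover have "a + x * (q + q) + x ^ 2 * r = q * (1 + x + x) + x ^ 2 * r - y"
    if "a = q - y" for a q x r y :: "int poly"
    using that by (simp add: algebra_simps)
  ultimately show ?thesis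
    using assms by (simp only: domination_poly_book_graph_expand dominating_pages_poly_full
        dominating_pages_poly_singleton dominating_pages_poly_empty insert_iff simp_thms)
qed
end
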